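(* Let $S$ be a finite set of points in the plane whose convex hull is the triangle $ABC$ with $A,B,C\in S$, and suppose $S$ contains at least two points other than $A,B,C$. Let $A_1$ be a point of $S\setminus\{A,B,C\}$ at maximum distance from the line $BC$ among the points of $S\setminus\{A,B,C\}$, and let $A_2$ be a point of $S\setminus\{A,B,C,A_1\}$ at maximum distance from the line $BC$ among the points of $S\setminus\{A,B,C,A_1\}$. Then every triangulation of $S$ contains at least one of the segments $A_1A_2$ or $AA_2$ as an edge.
   Context: A triangulation of a finite planar point set $S$ is a maximal set of straight line segments whose endpoints are in $S$, which contain no point of $S$ other than their endpoints, and any two of which meet at most in a common endpoint. *)

theory Defs
  imports "HOL-Analysis.Analysis"
begin

text \<open>An edge (straight line segment) with endpoints in S is represented by the
  two-element set of its endpoints; the segment itself is its convex hull.\<close>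

definition seg_edge :: "(real^2) set \<Rightarrow> (real^2) set \<Rightarrow> bool" where
  "seg_edge S e \<longleftrightarrow> (\<exists>p q. e = {p, q} \<and> p \<noteq> q \<and> p \<in> S \<and> q \<in> S
      \<and> closed_segment p q \<inter> S = {p, q})"

definition noncrossing :: "(real^2) set set \<Rightarrow> bool" where
  "noncrossing T \<longleftrightarrow> (\<forall>e\<in>T. \<forall>f\<in>T. e \<noteq> f \<longrightarrow> convex hull e \<inter> convex hull f \<subseteq> e \<inter> f)"

definition seg_family :: "(real^2) set \<Rightarrow> (real^2) set set \<Rightarrow> bool" where
  "seg_family S T \<longleftrightarrow> (\<forall>e\<in>T. seg_edge S e) \<and> noncrossing T"

definition triangulation :: "(real^2) set \<Rightarrow> (real^2) set set \<Rightarrow> bool" where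
  "triangulation S T \<longleftrightarrow> seg_family S T \<and> (\<forall>T'. seg_family S T' \<and> T \<subseteq> T' \<longrightarrow> T' = T)"

end

theory Submission
  imports Defs
begin

(* Take a linear functional f with f A - f B = 1 and f C = f B; then f z - f B is the barycentric
   coordinate of z at A, and on the triangle the distance to the line BC is proportional to it.
   Hence A and possibly A1 are the only points of S higher than A2 (with respect to f).
   By maximality of a triangulation T, a segment from A2 to a higher point q containing no other
   point of S is either an edge of T or crossed by one, and a crossing edge has an endpoint other
   than q higher than A2.  So if A1 is not higher than A2, then A2A is an edge.  Otherwise, if
   A2A1 is not an edge, it is crossed by an edge from A; this keeps A1 off the segment A2A, so if
   A2A is not an edge either, it is crossed by an edge from A1.  These two edges contain cevians
   of the triangle A2 A A1, which cross, contradicting noncrossing. *)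

lemma closed_segments_common_ray:
  fixes q v p y :: "'a::real_vector"
  assumes "y \<noteq> q" "y \<in> closed_segment q v" "y \<in> closed_segment q p"
  shows "v \<in> closed_segment q p \<or> p \<in> closed_segment q v"
proof -
  have shorter: "v \<in> closed_segment q p"
    if "a *\<^sub>R (v - q) = b *\<^sub>R (p - q)" "0 < a" "0 \<le> b" "b \<le> a" for a b :: real and v p :: 'a
  proof -
    have "v - q = (1 / a) *\<^sub>R (a *\<^sub>R (v - q))"
      using that(2) by simp
    also have "\<dots> = (b / a) *\<^sub>R (p - q)"
      using that(1) by simp
    finally have "v = (1 - b / a) *\<^sub>R q + (b / a) *\<^sub>R p"
      by (simp add: algebra_simps)
    then show ?thesis
      unfolding in_segment using that(2-4) by (intro exI[of _ "b / a"]) simp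
  qed
  obtain a where a: "0 \<le> a" "a \<le> 1" "y = (1 - a) *\<^sub>R q + a *\<^sub>R v"
    using assms(2) in_segment(1) by blast
  obtain b where b: "0 \<le> b" "b \<le> 1" "y = (1 - b) *\<^sub>R q + b *\<^sub>R p"
    using assms(3) in_segment(1) by blast
  have "a \<noteq> 0" "b \<noteq> 0"
    using assms(1) a(3) b(3) by auto
  moreover have "a *\<^sub>R (v - q) = b *\<^sub>R (p - q)"
    using a(3) b(3) by (simp add: algebra_simps)
  ultimately show ?thesis
    using shorter[of a v b p] shorter[of b p a v] a(1) b(1) by fastforce
qed

lemma closed_segment_through_contains:
  fixes p a b x c :: "'a::euclidean_space"
  assumes "b \<in> closed_segment p a" "x \<in> closed_segment p b" "x \<in> closed_segment a c"
  shows "b \<in> closed_segment a c"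
proof -
  have "x \<in> closed_segment p a"
    using assms(1,2) subset_closed_segment by blast
  then have "b \<in> closed_segment x a"
    using between_swap[of p a x b] assms(1,2) by (simp add: between_mem_segment)
  moreover have "closed_segment x a \<subseteq> closed_segment a c"
    using assms(3) by (simp add: subset_closed_segment)
  ultimately show ?thesis by blast
qed

lemma open_segment_subset_open_segment:
  fixes a b x :: "'a::euclidean_space"
  assumes "x \<in> open_segment a b"
  shows "open_segment a x \<subseteq> open_segment a b"
  using assms by (simp add: subset_open_segment open_closed_segment)

lemma open_segment_cevians_meet:
  fixes p a b x x' :: "'a::real_vector"
  assumes "x \<in> open_segment p a" "x' \<in> open_segment p b" "b \<noteq> x" "a \<noteq> x'"
  shows "open_segment b x \<inter> open_segment a x' \<noteq> {}"
proof -
  obtain s where s: "0 < s" "s < 1" "x = (1 - s) *\<^sub>R p + s *\<^sub>R a"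
    using assms(1) in_segment(2) by blast
  obtain t where t: "0 < t" "t < 1" "x' = (1 - t) *\<^sub>R p + t *\<^sub>R b"
    using assms(2) in_segment(2) by blast
  define D where "D = 1 - t * s"
  have "t * s < 1 * s"
    using s(1) t(2) by (rule mult_strict_right_mono[rotated])
  then have "t * s < 1" using s(2) by linarith
  then have D: "0 < D" by (simp add: D_def)
  \<comment> \<open>The common point is \<open>(t(1-s) b + s(1-t) a + (1-s)(1-t) p) / (1 - ts)\<close>.\<close>
  define \<alpha> where "\<alpha> = (1 - t) / D"
  define \<beta> where "\<beta> = (1 - s) / D"
  have \<alpha>: "0 < \<alpha>" "\<alpha> < 1" and \<beta>: "0 < \<beta>" "\<beta> < 1"
    using s t D by (auto simp: \<alpha>_def \<beta>_def D_def field_simps)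
  have coeffs: "1 - \<alpha> = \<beta> * t" "\<alpha> * (1 - s) = \<beta> * (1 - t)" "\<alpha> * s = 1 - \<beta>"
    using D by (simp_all add: \<alpha>_def \<beta>_def D_def field_simps)
  have "(1 - \<alpha>) *\<^sub>R b + \<alpha> *\<^sub>R x = (1 - \<alpha>) *\<^sub>R b + (\<alpha> * (1 - s)) *\<^sub>R p + (\<alpha> * s) *\<^sub>R a"
    by (simp add: s(3) scaleR_add_right add.assoc)
  also have "\<dots> = (\<beta> * t) *\<^sub>R b + (\<beta> * (1 - t)) *\<^sub>R p + (1 - \<beta>) *\<^sub>R a"
    by (simp only: coeffs)
  also have "\<dots> = (1 - \<beta>) *\<^sub>R a + \<beta> *\<^sub>R x'"
    by (simp add: t(3) algebra_simps)
  finally have "(1 - \<alpha>) *\<^sub>R b + \<alpha> *\<^sub>R x = (1 - \<beta>) *\<^sub>R a + \<beta> *\<^sub>R x'" .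
  moreover have "(1 - \<alpha>) *\<^sub>R b + \<alpha> *\<^sub>R x \<in> open_segment b x"
    using assms(3) \<alpha> in_segment(2) by blast
  moreover have "(1 - \<beta>) *\<^sub>R a + \<beta> *\<^sub>R x' \<in> open_segment a x'"
    using assms(4) \<beta> in_segment(2) by blast
  ultimately show ?thesis by auto
qed

lemma linear_open_segment_between:
  fixes f :: "'a::real_vector \<Rightarrow> real"
  assumes "linear f" "z \<in> open_segment p q" "f p < f q"
  shows "f p < f z" "f z < f q"
proof -
  obtain u where u: "0 < u" "u < 1" "z = (1 - u) *\<^sub>R p + u *\<^sub>R q"
    using assms(2) in_segment(2) by blast
  have "f z = (1 - u) * f p + u * f q"
    using assms(1) u(3) by (simp add: linear_add linear_scale)
  then have "f z = f p + u * (f q - f p)"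
    by (simp add: algebra_simps)
  moreover have "0 < u * (f q - f p)"
    using u(1) assms(3) by simp
  moreover have "u * (f q - f p) < f q - f p"
    using u(2) assms(3) by simp
  ultimately show "f p < f z" "f z < f q"
    by linarith+
qed

lemma linear_closed_segment_le_max:
  fixes f :: "'a::real_vector \<Rightarrow> real"
  assumes "linear f" "z \<in> closed_segment p q"
  shows "f z \<le> max (f p) (f q)"
proof -
  obtain u where u: "0 \<le> u" "u \<le> 1" "z = (1 - u) *\<^sub>R p + u *\<^sub>R q"
    using assms(2) in_segment(1) by blast
  have "f z = (1 - u) * f p + u * f q"
    using assms(1) u(3) by (simp add: linear_add linear_scale)
  also have "\<dots> \<le> (1 - u) * max (f p) (f q) + u * max (f p) (f q)"
    using u(1,2) by (intro add_mono mult_left_mono) auto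
  finally show ?thesis by (simp add: algebra_simps)
qed

lemma infdist_affine_homothety:
  fixes L :: "'a::real_normed_vector set"
  assumes "affine L" "w \<in> L" "0 \<le> u"
  shows "infdist (w + u *\<^sub>R (a - w)) L = u * infdist a L"
proof (cases "u = 0")
  case True
  then show ?thesis
    using assms(2) by simp
next
  case False
  with assms(3) have u: "0 < u" by simp
  define \<phi> where "\<phi> y = w + u *\<^sub>R (y - w)" for y
  have \<phi>_dist: "dist (\<phi> a) (\<phi> y) = u * dist a y" for y
    using u by (simp add: \<phi>_def dist_norm flip: scaleR_diff_right)
  have in_L: "w + c *\<^sub>R (y - w) \<in> L" if "y \<in> L" for c y
  proof -
    have "(1 - c) *\<^sub>R w + c *\<^sub>R y \<in> L"
      using assms(1,2) that unfolding affine_alt by blast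
    then show ?thesis by (simp add: algebra_simps)
  qed
  have L: "L \<noteq> {}" using assms(2) by blast
  show ?thesis
    unfolding \<phi>_def[symmetric]
  proof (rule antisym)
    have "infdist (\<phi> a) L / u \<le> dist a y" if "y \<in> L" for y
      using infdist_le[OF in_L[OF that], of "\<phi> a" u] u \<phi>_dist[of y]
      by (simp add: \<phi>_def divide_le_eq mult.commute)
    then have "infdist (\<phi> a) L / u \<le> infdist a L"
      unfolding infdist_notempty[OF L] by (intro cINF_greatest[OF L])
    then show "infdist (\<phi> a) L \<le> u * infdist a L"
      using u by (simp add: divide_le_eq mult.commute)
  next
    have "u * infdist a L \<le> dist (\<phi> a) y" if "y \<in> L" for y
    proof -
      define y' where "y' = w + (1 / u) *\<^sub>R (y - w)"
      have "\<phi> y' = y"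
        using u by (simp add: \<phi>_def y'_def)
      then have "dist (\<phi> a) y = u * dist a y'"
        using \<phi>_dist[of y'] by simp
      moreover have "infdist a L \<le> dist a y'"
        using in_L[OF that] by (simp add: y'_def infdist_le)
      ultimately show ?thesis
        using u by simp
    qed
    then show "u * infdist a L \<le> infdist (\<phi> a) L"
      unfolding infdist_notempty[OF L] by (intro cINF_greatest[OF L])
  qed
qed

lemma infdist_line_convex_combination:
  fixes A B C :: "'a::real_normed_vector"
  assumes "0 \<le> u" "0 \<le> v" "0 \<le> w" "u + v + w = 1"
  shows "infdist (u *\<^sub>R A + v *\<^sub>R B + w *\<^sub>R C) (affine hull {B, C}) = u * infdist A (affine hull {B, C})"
proof (cases "u = 1")
  case True
  with assms have "v = 0" "w = 0" by linarith+
  with True show ?thesis by simp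
next
  case False
  define F where "F = B + (w / (1 - u)) *\<^sub>R (C - B)"
  have "F = (1 - w / (1 - u)) *\<^sub>R B + (w / (1 - u)) *\<^sub>R C"
    by (simp add: F_def algebra_simps)
  then have F: "F \<in> affine hull {B, C}"
    unfolding affine_hull_2 by (intro CollectI exI[of _ "1 - w / (1 - u)"] exI[of _ "w / (1 - u)"]) simp
  have "(1 - u) *\<^sub>R F = (1 - u) *\<^sub>R B + w *\<^sub>R (C - B)"
    using False by (simp add: F_def scaleR_add_right)
  then have "F + u *\<^sub>R (A - F) = u *\<^sub>R A + ((1 - u) *\<^sub>R B + w *\<^sub>R (C - B))"
    by (simp add: algebra_simps)
  also have "1 - u = v + w"
    using assms(4) by linarith
  also have "u *\<^sub>R A + ((v + w) *\<^sub>R B + w *\<^sub>R (C - B)) = u *\<^sub>R A + v *\<^sub>R B + w *\<^sub>R C"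
    by (simp add: algebra_simps)
  finally have "F + u *\<^sub>R (A - F) = u *\<^sub>R A + v *\<^sub>R B + w *\<^sub>R C" .
  then show ?thesis
    using infdist_affine_homothety[OF affine_affine_hull F assms(1), of A] by simp
qed

lemma barycentric_functional_exists:
  fixes A B C :: "'a::real_vector"
  assumes "\<not> collinear {A, B, C}"
  obtains f :: "'a \<Rightarrow> real" where "linear f" "f (A - B) = 1" "f (C - B) = 0"
proof -
  have distinct: "A \<noteq> B" "A \<noteq> C" "B \<noteq> C" and "\<not> affine_dependent {B, A, C}"
    using assms by (auto simp: collinear_3_eq_affine_dependent insert_commute)
  then have "independent ((\<lambda>x. - B + x) ` {A, C})"
    using affine_dependent_iff_dependent[of B "{A, C}"] by simp
  then have "independent {A - B, C - B}"
    by simp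
  then obtain f :: "'a \<Rightarrow> real"
    where "linear f" "\<forall>x\<in>{A - B, C - B}. f x = (if x = A - B then 1 else 0)"
    using linear_independent_extend[of _ "\<lambda>x. if x = A - B then 1 else 0"] by blast
  moreover have "A - B \<noteq> C - B"
    using distinct(2) by simp
  ultimately show thesis
    using that by simp
qed

lemma barycentric_functional_on_triangle:
  fixes f :: "'a::real_normed_vector \<Rightarrow> real"
  assumes f: "linear f" "f (A - B) = 1" "f (C - B) = 0" and "z \<in> convex hull {A, B, C}"
  shows "f B \<le> f z" "z \<noteq> A \<Longrightarrow> f z < f A"
    "infdist z (affine hull {B, C}) = (f z - f B) * infdist A (affine hull {B, C})"
proof -
  obtain u v w where z: "z = u *\<^sub>R A + v *\<^sub>R B + w *\<^sub>R C" "0 \<le> u" "0 \<le> v" "0 \<le> w" "u + v + w = 1"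
    using assms(4) unfolding convex_hull_3 by blast
  have "f A = f B + 1" "f C = f B"
    using f by (simp_all add: linear_diff)
  moreover have "f z = u * f A + v * f B + w * f C"
    using f(1) z(1) by (simp add: linear_add linear_scale)
  ultimately have "f z = u + (u + v + w) * f B"
    by (simp add: algebra_simps)
  then have u: "f z - f B = u"
    using z(5) by simp
  then show "f B \<le> f z"
    using z(2) by simp
  show "f z < f A" if "z \<noteq> A"
  proof -
    have "u \<noteq> 1"
    proof
      assume "u = 1"
      with z(3-5) have "v = 0" "w = 0" by linarith+
      with \<open>u = 1\<close> z(1) that show False by simp
    qed
    with u z(5) \<open>f A = f B + 1\<close> z(3,4) show ?thesis by linarith
  qed
  show "infdist z (affine hull {B, C}) = (f z - f B) * infdist A (affine hull {B, C})"
    using infdist_line_convex_combination[OF z(2-5), of A B C] z(1) u by simp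
qed

lemma triangulation_edgeD:
  assumes "triangulation S T" "{u, v} \<in> T"
  shows "u \<noteq> v" "u \<in> S" "v \<in> S" "closed_segment u v \<inter> S = {u, v}"
proof -
  have "seg_edge S {u, v}"
    using assms unfolding triangulation_def seg_family_def by blast
  then obtain p q where pq: "{u, v} = {p, q}" "p \<noteq> q" "p \<in> S" "q \<in> S" "closed_segment p q \<inter> S = {p, q}"
    unfolding seg_edge_def by blast
  from pq(1) have uv: "u = p \<and> v = q \<or> u = q \<and> v = p"
    by (simp add: doubleton_eq_iff)
  then show "u \<noteq> v" "u \<in> S" "v \<in> S"
    using pq(2-4) by blast+
  have "closed_segment u v = closed_segment p q"
    using uv closed_segment_commute by blast
  then show "closed_segment u v \<inter> S = {u, v}"
    unfolding pq(1) by (simp only: pq(5))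
qed

lemma triangulation_open_segments_disjoint:
  assumes "triangulation S T" "{a, b} \<in> T" "{c, d} \<in> T" "{a, b} \<noteq> {c, d}"
  shows "open_segment a b \<inter> open_segment c d = {}"
proof -
  have "convex hull e \<inter> convex hull e' \<subseteq> e \<inter> e'" if "e \<in> T" "e' \<in> T" "e \<noteq> e'" for e e'
    using assms(1) that unfolding triangulation_def seg_family_def noncrossing_def by blast
  from this[OF assms(2-4)] show ?thesis
    unfolding open_segment_def segment_convex_hull by blast
qed

lemma triangulation_crossing_edge:
  assumes tri: "triangulation S T" and "p \<in> S" "q \<in> S" "p \<noteq> q"
    and empty: "open_segment p q \<inter> S = {}" and "{p, q} \<notin> T"
  obtains u v x where "{u, v} \<in> T" "x \<in> open_segment u v" "x \<in> open_segment p q"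
proof -
  have seg_pq: "closed_segment p q \<inter> S = {p, q}"
    using assms(2,3) empty unfolding closed_segment_eq_open by blast
  then have "seg_edge S {p, q}"
    using assms(2-4) unfolding seg_edge_def by blast
  moreover have "seg_family S T" "\<not> seg_family S (insert {p, q} T)"
    using tri \<open>{p, q} \<notin> T\<close> unfolding triangulation_def by blast+
  ultimately have "noncrossing T" "\<not> noncrossing (insert {p, q} T)"
    unfolding seg_family_def by blast+
  then obtain e where "e \<in> T" "\<not> convex hull e \<inter> convex hull {p, q} \<subseteq> e \<inter> {p, q}"
    unfolding noncrossing_def by (metis Int_commute insertE)
  moreover obtain u v where "e = {u, v}"
    using tri \<open>e \<in> T\<close> unfolding triangulation_def seg_family_def seg_edge_def by blast
  ultimately obtain x where uv: "{u, v} \<in> T" and x: "x \<in> closed_segment u v" "x \<in> closed_segment p q"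
      "x \<notin> {u, v} \<inter> {p, q}"
    unfolding segment_convex_hull by blast
  have "closed_segment u v \<inter> S = {u, v}" "u \<in> S" "v \<in> S"
    using triangulation_edgeD[OF tri uv] by simp_all
  then have "x \<notin> {u, v}" "x \<notin> {p, q}"
    using x seg_pq assms(2,3) by blast+
  then show thesis
    using that uv x(1,2) unfolding open_segment_def by blast
qed

lemma triangulation_crossing_edge_above:
  fixes f :: "real^2 \<Rightarrow> real"
  assumes tri: "triangulation S T" and f: "linear f" and "p \<in> S" "q \<in> S"
    and empty: "open_segment p q \<inter> S = {}" and "{p, q} \<notin> T" and "f p < f q"
  obtains u v x where "{u, v} \<in> T" "u \<noteq> q" "f p < f u" "x \<in> open_segment u v" "x \<in> open_segment p q"
proof -
  obtain u v x where uv: "{u, v} \<in> T" and x: "x \<in> open_segment u v" "x \<in> open_segment p q"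
    using triangulation_crossing_edge[OF tri assms(3,4) _ empty assms(6)] assms(7) by blast
  have "closed_segment p q \<inter> S = {p, q}"
    using assms(3,4) empty unfolding closed_segment_eq_open by blast
  then have seg_qp: "closed_segment q p \<inter> S = {q, p}"
    by (metis closed_segment_commute insert_commute)
  \<comment> \<open>An edge from \<open>q\<close> through an interior point of \<open>pq\<close> lies on the ray from \<open>q\<close> through \<open>p\<close>.\<close>
  have no_edge_from_q: False if "{q, w} \<in> T" "x \<in> open_segment q w" for w
  proof -
    have "x \<noteq> q" "x \<in> closed_segment q w" "x \<in> closed_segment q p"
      using that(2) x(2) by (auto simp: open_segment_def closed_segment_commute)
    then have "w \<in> closed_segment q p \<or> p \<in> closed_segment q w"
      by (rule closed_segments_common_ray)
    moreover have "closed_segment q w \<inter> S = {q, w}" "w \<in> S" "q \<noteq> w"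
      using triangulation_edgeD[OF tri that(1)] by simp_all
    ultimately have "w \<in> {q, p} \<or> p \<in> {q, w}"
      using seg_qp assms(3) by blast
    then have "w = p"
      using \<open>q \<noteq> w\<close> assms(7) by auto
    then show False
      using that(1) assms(6) by (simp add: insert_commute)
  qed
  have "f p < f x"
    using linear_open_segment_between(1)[OF f x(2) assms(7)] .
  moreover have "f x \<le> max (f u) (f v)"
    using linear_closed_segment_le_max[OF f open_closed_segment[OF x(1)]] .
  ultimately consider "f p < f u" | "f p < f v"
    by linarith
  then show thesis
  proof cases
    case 1
    moreover have "u \<noteq> q"
      using no_edge_from_q[of v] uv x(1) by blast
    ultimately show thesis
      using that uv x by blast
  next
    case 2
    moreover have "{v, u} \<in> T" "x \<in> open_segment v u"
      using uv x(1) by (simp_all add: insert_commute open_segment_commute)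
    moreover have "v \<noteq> q"
      using no_edge_from_q[of u] calculation(2,3) by blast
    ultimately show thesis
      using that x(2) by blast
  qed
qed

lemma triangulation_edge_to_unique_point_above:
  fixes f :: "real^2 \<Rightarrow> real"
  assumes tri: "triangulation S T" and f: "linear f" and "P \<in> S" "A \<in> S" "f P < f A"
    and above: "\<forall>z\<in>S. f P < f z \<longrightarrow> z = A"
  shows "{P, A} \<in> T"
proof (rule ccontr)
  assume "{P, A} \<notin> T"
  have "open_segment P A \<inter> S = {}"
    using linear_open_segment_between[OF f _ assms(5)] above by fastforce
  then obtain u v where "{u, v} \<in> T" "u \<noteq> A" "f P < f u"
    using triangulation_crossing_edge_above[OF tri f assms(3,4) _ \<open>{P, A} \<notin> T\<close> assms(5)] by blast
  with above triangulation_edgeD(2)[OF tri] show False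
    by blast
qed

lemma triangulation_edge_from_top_across:
  fixes f :: "real^2 \<Rightarrow> real"
  assumes tri: "triangulation S T" and f: "linear f" and S: "P \<in> S" "A \<in> S" "A1 \<in> S"
    and f_less: "f P < f A1" "f A1 < f A"
    and above: "\<forall>z\<in>S. f P < f z \<longrightarrow> z = A \<or> z = A1"
    and "{P, A1} \<notin> T"
  obtains v' x' where "{A, v'} \<in> T" "v' \<noteq> A1" "x' \<in> open_segment A v'" "x' \<in> open_segment P A1"
proof -
  have "open_segment P A1 \<inter> S = {}"
    using linear_open_segment_between[OF f _ f_less(1)] above f_less(2) by fastforce
  then obtain u v' x' where "{u, v'} \<in> T" "u \<noteq> A1" "f P < f u"
      and x': "x' \<in> open_segment u v'" "x' \<in> open_segment P A1"
    using triangulation_crossing_edge_above[OF tri f S(1,3) _ assms(9) f_less(1)] by blast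
  moreover have "u \<in> S"
    using triangulation_edgeD(2)[OF tri \<open>{u, v'} \<in> T\<close>] .
  ultimately have edge: "{A, v'} \<in> T" "x' \<in> open_segment A v'"
    using above by blast+
  moreover have "v' \<noteq> A1"
  proof
    assume "v' = A1"
    then have "x' \<in> open_segment A1 A"
      using edge(2) by (simp add: open_segment_commute)
    then have "f A1 < f x'"
      using linear_open_segment_between(1)[OF f _ f_less(2)] by blast
    moreover have "f x' < f A1"
      using linear_open_segment_between(2)[OF f x'(2) f_less(1)] .
    ultimately show False
      by simp
  qed
  ultimately show thesis
    using that x'(2) by blast
qed

lemma triangulation_edge_to_one_of_two_points_above:
  fixes f :: "real^2 \<Rightarrow> real"
  assumes tri: "triangulation S T" and f: "linear f" and S: "P \<in> S" "A \<in> S" "A1 \<in> S"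
    and f_less: "f P < f A1" "f A1 < f A"
    and above: "\<forall>z\<in>S. f P < f z \<longrightarrow> z = A \<or> z = A1"
  shows "{P, A1} \<in> T \<or> {P, A} \<in> T"
proof (rule ccontr)
  assume "\<not> ?thesis"
  then have no_edges: "{P, A1} \<notin> T" "{P, A} \<notin> T"
    by auto
  obtain v' x' where edge_A: "{A, v'} \<in> T" "v' \<noteq> A1"
    and x': "x' \<in> open_segment A v'" "x' \<in> open_segment P A1"
    using triangulation_edge_from_top_across[OF tri f S f_less above no_edges(1)] by blast
  have A1_off: "A1 \<notin> closed_segment P A"
  proof
    assume "A1 \<in> closed_segment P A"
    then have "A1 \<in> closed_segment A v'"
      using closed_segment_through_contains x' open_closed_segment by blast
    then show False
      using triangulation_edgeD(4)[OF tri edge_A(1)] S(3) f_less(2) edge_A(2) by auto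
  qed
  have "open_segment P A \<inter> S = {}"
    using linear_open_segment_between(1)[OF f _ less_trans[OF f_less]] above A1_off
    by (fastforce simp: open_segment_def)
  then obtain w v x where "{w, v} \<in> T" "w \<noteq> A" "f P < f w"
      and x: "x \<in> open_segment w v" "x \<in> open_segment P A"
    using triangulation_crossing_edge_above[OF tri f S(1,2) _ no_edges(2) less_trans[OF f_less]] by blast
  moreover have "w \<in> S"
    using triangulation_edgeD(2)[OF tri \<open>{w, v} \<in> T\<close>] .
  ultimately have edge_A1: "{A1, v} \<in> T" "x \<in> open_segment A1 v"
    using above by blast+
  have "A1 \<noteq> x"
    using A1_off x(2) open_closed_segment by blast
  moreover have "A \<noteq> x'"
    using linear_open_segment_between(2)[OF f x'(2) f_less(1)] f_less(2) by auto
  ultimately have "open_segment A1 x \<inter> open_segment A x' \<noteq> {}"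
    using open_segment_cevians_meet x(2) x'(2) by blast
  moreover have "open_segment A1 x \<subseteq> open_segment A1 v" "open_segment A x' \<subseteq> open_segment A v'"
    using open_segment_subset_open_segment edge_A1(2) x'(1) by blast+
  moreover have "{A1, v} \<noteq> {A, v'}"
    using f_less(2) edge_A(2) by (auto simp: doubleton_eq_iff)
  then have "open_segment A1 v \<inter> open_segment A v' = {}"
    using triangulation_open_segments_disjoint[OF tri edge_A1(1) edge_A(1)] by blast
  ultimately show False
    by blast
qed

lemma triangulation_edge_to_point_above:
  fixes f :: "real^2 \<Rightarrow> real"
  assumes tri: "triangulation S T" and f: "linear f" and S: "P \<in> S" "A \<in> S" "A1 \<in> S"
    and f_less: "f P < f A" "f A1 < f A"
    and above: "\<forall>z\<in>S. f P < f z \<longrightarrow> z = A \<or> z = A1"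
  shows "{P, A1} \<in> T \<or> {P, A} \<in> T"
proof (cases "f P < f A1")
  case True
  show ?thesis
    using triangulation_edge_to_one_of_two_points_above[OF tri f S True f_less(2) above] .
next
  case False
  then have "\<forall>z\<in>S. f P < f z \<longrightarrow> z = A"
    using above by auto
  then show ?thesis
    using triangulation_edge_to_unique_point_above[OF tri f S(1,2) f_less(1)] by blast
qed

theorem lemma4p3:
  fixes S :: "(real^2) set" and A B C A1 A2 :: "real^2"
  assumes "finite S"
    and "A \<in> S" "B \<in> S" "C \<in> S"
    and "\<not> collinear {A, B, C}"
    and "convex hull S = convex hull {A, B, C}"
    and "card (S - {A, B, C}) \<ge> 2"
    and "A1 \<in> S - {A, B, C}"
    and "\<forall>x\<in>S - {A, B, C}. infdist x (affine hull {B, C}) \<le> infdist A1 (affine hull {B, C})"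
    and "A2 \<in> S - {A, B, C, A1}"
    and "\<forall>x\<in>S - {A, B, C, A1}. infdist x (affine hull {B, C}) \<le> infdist A2 (affine hull {B, C})"
  shows "\<forall>T. triangulation S T \<longrightarrow> {A1, A2} \<in> T \<or> {A, A2} \<in> T"
proof (intro allI impI)
  fix T assume tri: "triangulation S T"
  let ?L = "affine hull {B, C}"
  obtain f :: "real^2 \<Rightarrow> real" where f: "linear f" "f (A - B) = 1" "f (C - B) = 0"
    using barycentric_functional_exists[OF assms(5)] by blast
  have "S \<subseteq> convex hull {A, B, C}"
    unfolding assms(6)[symmetric] by (rule hull_subset)
  note coord = barycentric_functional_on_triangle[OF f subsetD[OF this]]
  have "A \<notin> ?L"
    using assms(5) affine_hull_3_imp_collinear by (metis insert_commute)
  then have d: "0 < infdist A ?L"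
    using in_closed_iff_infdist_zero[OF closed_affine_hull, of "{B, C}" A] infdist_nonneg[of A ?L]
    by auto
  have A1: "A1 \<in> S" "A1 \<noteq> A" and A2: "A2 \<in> S" "A2 \<noteq> A"
    using assms(8,10) by auto
  have above: "\<forall>z\<in>S. f A2 < f z \<longrightarrow> z = A \<or> z = A1"
  proof (intro ballI impI)
    fix z assume z: "z \<in> S" "f A2 < f z"
    have "f C = f B"
      using f by (simp add: linear_diff)
    then have "z \<noteq> B" "z \<noteq> C"
      using coord(1)[OF A2(1)] z(2) by auto
    show "z = A \<or> z = A1"
    proof (rule ccontr)
      assume "\<not> (z = A \<or> z = A1)"
      then have "infdist z ?L \<le> infdist A2 ?L"
        using assms(11) z(1) \<open>z \<noteq> B\<close> \<open>z \<noteq> C\<close> by blast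
      then have "(f z - f B) * infdist A ?L \<le> (f A2 - f B) * infdist A ?L"
        unfolding coord(3)[OF z(1)] coord(3)[OF A2(1)] .
      then show False
        using d z(2) by simp
    qed
  qed
  have "{A2, A1} \<in> T \<or> {A2, A} \<in> T"
    using triangulation_edge_to_point_above[OF tri f(1) A2(1) assms(2) A1(1)
        coord(2)[OF A2] coord(2)[OF A1] above] .
  then show "{A1, A2} \<in> T \<or> {A, A2} \<in> T"
    by (simp add: insert_commute)
qed

end
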